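(* Let $p\in[1,\infty]$, $\mu_i\in\mathcal P_p(X_i)$, $i=1,\dots,N$, and let $c,\tilde c:X\to[0,\infty)$ satisfy the growth condition of order $p$. Let $\pi^*,\tilde\pi^*$ be the optimizers of $S_{\rm ent}(\mu_1,\dots,\mu_N,c)$ and $S_{\rm ent}(\mu_1,\dots,\mu_N,\tilde c)$. Then $$D_{\rm KL}(\pi^*,\tilde\pi^* )+D_{\rm KL}(\tilde\pi^*,\pi^* )\le\int(c-\tilde c)\,d(\tilde\pi^*-\pi^* ).$$
   Context: $(X_i,d_{X_i})$ Polish, $X=\prod_iX_i$, $d_{X,p}(x,y)=(\sum_id_{X_i}(x_i,y_i)^p)^{1/p}$ ($\max$ for $p=\infty$); $\mathcal P_p$ finite $p$-th moment (bounded support if $p=\infty$). Growth of order $p$: $|c(x)|\le C(1+d_{X,p}(x,\hat x)^p)$ for some $C,\hat x$ ($c$ bounded if $p=\infty$). $S_{\rm ent}(\mu_1,\dots,\mu_N,c)=\inf_{\pi\in\Pi(\mu_1,\dots,\mu_N)}\int c\,d\pi+D_{\rm KL}(\pi,\mu_1\otimes\cdots\otimes\mu_N)$, $\Pi$ = couplings, unique optimizer. *)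

theory Defs
  imports "HOL-Probability.Probability"
begin

definition borel_of :: "'a topology \<Rightarrow> 'a measure" where
  "borel_of T = sigma (topspace T) {U. openin T U}"

definition polish_metric :: "'a set \<Rightarrow> ('a \<Rightarrow> 'a \<Rightarrow> real) \<Rightarrow> bool" where
  "polish_metric S d \<longleftrightarrow> Metric_space S d \<and> Metric_space.mcomplete S d
      \<and> separable_space (Metric_space.mtopology S d)"

definition metric_borel :: "'a set \<Rightarrow> ('a \<Rightarrow> 'a \<Rightarrow> real) \<Rightarrow> 'a measure" where
  "metric_borel S d = borel_of (Metric_space.mtopology S d)"

text \<open>P_p(X_i): Borel probability measures with finite p-th moment (p < infinity),
  resp. bounded support (p = infinity).  p is an extended real with p \<ge> 1.\<close>
definition P_p :: "ereal \<Rightarrow> 'a set \<Rightarrow> ('a \<Rightarrow> 'a \<Rightarrow> real) \<Rightarrow> 'a measure \<Rightarrow> bool" where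
  "P_p p S d \<mu> \<longleftrightarrow> prob_space \<mu> \<and> sets \<mu> = sets (metric_borel S d) \<and>
     (if p = \<infinity> then (\<exists>x0\<in>S. \<exists>r. emeasure \<mu> (S - Metric_space.mcball S d x0 r) = 0)
      else (\<exists>x0\<in>S. (\<integral>\<^sup>+ x. ennreal (d x x0 powr real_of_ereal p) \<partial>\<mu>) < \<infinity>))"

text \<open>p-th power of the product metric d_{X,p}(x,y)^p = sum_i d_i(x_i,y_i)^p (p finite).\<close>
definition dXp_pow :: "nat \<Rightarrow> (nat \<Rightarrow> 'a \<Rightarrow> 'a \<Rightarrow> real) \<Rightarrow> real \<Rightarrow> (nat \<Rightarrow> 'a) \<Rightarrow> (nat \<Rightarrow> 'a) \<Rightarrow> real" where
  "dXp_pow N d p x y = (\<Sum>i<N. d i (x i) (y i) powr p)"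

definition growth_p :: "ereal \<Rightarrow> nat \<Rightarrow> (nat \<Rightarrow> 'a set) \<Rightarrow> (nat \<Rightarrow> 'a \<Rightarrow> 'a \<Rightarrow> real)
    \<Rightarrow> ((nat \<Rightarrow> 'a) \<Rightarrow> real) \<Rightarrow> bool" where
  "growth_p p N S d c \<longleftrightarrow>
     (if p = \<infinity> then (\<exists>C. \<forall>x\<in>(\<Pi>\<^sub>E i\<in>{..<N}. S i). \<bar>c x\<bar> \<le> C)
      else (\<exists>C. \<exists>xh\<in>(\<Pi>\<^sub>E i\<in>{..<N}. S i). \<forall>x\<in>(\<Pi>\<^sub>E i\<in>{..<N}. S i).
               \<bar>c x\<bar> \<le> C * (1 + dXp_pow N d (real_of_ereal p) x xh)))"

text \<open>Kullback-Leibler divergence D_KL(P,Q) with values in [0,\<infinity>]: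
  \<infinity> unless P \<ll> Q, otherwise \<integral> f ln f dQ with f = dP/dQ.\<close>
definition KL_div :: "'a measure \<Rightarrow> 'a measure \<Rightarrow> ereal" where
  "KL_div P Q = (if sets P = sets Q \<and> absolutely_continuous Q P then
     (let f = (\<lambda>x. enn2real (RN_deriv Q P x)); g = (\<lambda>x. f x * ln (f x)) in
       enn2ereal (\<integral>\<^sup>+ x. ennreal (g x) \<partial>Q) - enn2ereal (\<integral>\<^sup>+ x. ennreal (- g x) \<partial>Q))
     else \<infinity>)"

definition couplings :: "nat \<Rightarrow> (nat \<Rightarrow> 'a measure) \<Rightarrow> (nat \<Rightarrow> 'a) measure set" where
  "couplings N \<mu> = {\<pi>. prob_space \<pi> \<and> sets \<pi> = sets (\<Pi>\<^sub>M i\<in>{..<N}. \<mu> i) \<and>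
      (\<forall>i<N. distr \<pi> (\<mu> i) (\<lambda>x. x i) = \<mu> i)}"

definition ent_obj :: "nat \<Rightarrow> (nat \<Rightarrow> 'a measure) \<Rightarrow> ((nat \<Rightarrow> 'a) \<Rightarrow> real) \<Rightarrow> (nat \<Rightarrow> 'a) measure \<Rightarrow> ereal" where
  "ent_obj N \<mu> c \<pi> = enn2ereal (\<integral>\<^sup>+ x. ennreal (c x) \<partial>\<pi>) + KL_div \<pi> (\<Pi>\<^sub>M i\<in>{..<N}. \<mu> i)"

definition S_ent :: "nat \<Rightarrow> (nat \<Rightarrow> 'a measure) \<Rightarrow> ((nat \<Rightarrow> 'a) \<Rightarrow> real) \<Rightarrow> ereal" where
  "S_ent N \<mu> c = (INF \<pi>\<in>couplings N \<mu>. ent_obj N \<mu> c \<pi>)"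

definition is_ent_optimizer :: "nat \<Rightarrow> (nat \<Rightarrow> 'a measure) \<Rightarrow> ((nat \<Rightarrow> 'a) \<Rightarrow> real) \<Rightarrow> (nat \<Rightarrow> 'a) measure \<Rightarrow> bool" where
  "is_ent_optimizer N \<mu> c \<pi> \<longleftrightarrow> \<pi> \<in> couplings N \<mu> \<and> ent_obj N \<mu> c \<pi> = S_ent N \<mu> c"

end

theory Submission
  imports Defs "HOL-Real_Asymp.Real_Asymp"
begin

text \<open>Write \<open>\<pi> = r R\<close> and \<open>\<pi>t = s R\<close> with \<open>R = \<mu>\<^sub>1 \<otimes> \<dots> \<otimes> \<mu>\<^sub>N\<close>. Comparing the
  optimizer \<open>\<pi>\<close> with the coupling \<open>(1 - t) \<pi> + t \<pi>t\<close> gives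
  \<open>\<integral> r ln r dR - t \<integral> c d(\<pi>t - \<pi>) \<le> \<integral> m ln m dR\<close> for \<open>m = (1 - t) r + t s\<close>,
  and symmetrically for \<open>\<pi>t\<close> and \<open>ct\<close>. Adding both and dividing by \<open>t\<close>, the left-hand
  side becomes the integral of the convexity defect of \<open>x ln x\<close> along the segment from
  \<open>r\<close> to \<open>s\<close>, divided by \<open>t\<close>. As \<open>t \<rightarrow> 0\<close> this tends pointwise to
  \<open>(s - r)(ln s - ln r)\<close>, so by Fatou's lemma its integral, which is
  \<open>D\<^sub>K\<^sub>L(\<pi>, \<pi>t) + D\<^sub>K\<^sub>L(\<pi>t, \<pi>)\<close>, is bounded by \<open>\<integral> (c - ct) d(\<pi>t - \<pi>)\<close>.\<close>

definition xlogx :: "real \<Rightarrow> real" where "xlogx x = x * ln x"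

lemma xlogx_ge: "0 \<le> x \<Longrightarrow> x - 1 \<le> xlogx x"
proof (cases "x = 0")
  case False
  assume "0 \<le> x"
  then have x: "x > 0" using False by auto
  have "ln (1/x) \<le> 1/x - 1" using x by (intro ln_le_minus_one) auto
  then have "x * (- ln x) \<le> x * (1/x - 1)" using x by (intro mult_left_mono) (auto simp: ln_div)
  then show ?thesis using x by (simp add: xlogx_def algebra_simps)
qed (simp add: xlogx_def)

lemma xlogx_tangent_le:
  assumes "0 \<le> x" "0 < y"
  shows "xlogx y + (ln y + 1) * (x - y) \<le> xlogx x"
proof (cases "x = 0")
  case True then show ?thesis using assms by (simp add: xlogx_def algebra_simps)
next
  case False
  then have x: "x > 0" using assms by auto
  have "ln (y/x) \<le> y/x - 1" using x assms by (intro ln_le_minus_one) auto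
  then have "x * (ln y - ln x) \<le> x * (y/x - 1)" using x assms by (intro mult_left_mono) (auto simp: ln_div)
  then show ?thesis using x by (simp add: xlogx_def algebra_simps)
qed

lemma xlogx_convex:
  assumes "0 \<le> a" "0 \<le> b" "0 \<le> t" "t \<le> 1"
  shows "xlogx ((1-t)*a + t*b) \<le> (1-t) * xlogx a + t * xlogx b"
proof (cases "(1-t)*a + t*b = 0")
  case True
  then have z: "(1-t)*a = 0" "t*b = 0" using assms by (smt (verit) mult_nonneg_nonneg)+
  have "(1-t) * xlogx a = 0" "t * xlogx b = 0"
    using z unfolding xlogx_def by (metis mult.assoc mult_zero_left)+
  moreover have "xlogx ((1-t)*a + t*b) = 0" unfolding True by (simp add: xlogx_def)
  ultimately show ?thesis by linarith
next
  case False
  define m where "m = (1-t)*a + t*b"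
  have m: "m > 0" using False assms unfolding m_def by (smt (verit) mult_nonneg_nonneg)
  have "(1-t) * (xlogx m + (ln m + 1) * (a - m)) \<le> (1-t) * xlogx a"
    using xlogx_tangent_le[OF assms(1) m] assms by (intro mult_left_mono) auto
  moreover have "t * (xlogx m + (ln m + 1) * (b - m)) \<le> t * xlogx b"
    using xlogx_tangent_le[OF assms(2) m] assms by (intro mult_left_mono) auto
  moreover have "(1-t) * (xlogx m + (ln m + 1) * (a - m)) + t * (xlogx m + (ln m + 1) * (b - m)) = xlogx m"
    unfolding m_def by (simp add: algebra_simps)
  ultimately show ?thesis unfolding m_def by linarith
qed

lemma borel_measurable_xlogx[measurable (raw)]:
  assumes "f \<in> borel_measurable M"
  shows "(\<lambda>x. xlogx (f x)) \<in> borel_measurable M"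
  unfolding xlogx_def by (intro borel_measurable_times borel_measurable_ln assms)

text \<open>The integrand of \<open>D\<^sub>K\<^sub>L(r R, s R) + D\<^sub>K\<^sub>L(s R, r R) = \<integral> (s - r)(ln s - ln r) dR\<close>;
  it is infinite where exactly one of the two densities vanishes.\<close>
definition jeffreys :: "real \<Rightarrow> real \<Rightarrow> ennreal" where
  "jeffreys a b = (if 0 < a \<and> 0 < b then ennreal ((b-a)*(ln b - ln a)) else if a = b then 0 else \<top>)"

definition jeffreys_quotient :: "real \<Rightarrow> real \<Rightarrow> real \<Rightarrow> real" where
  "jeffreys_quotient t a b =
     (xlogx a + xlogx b - xlogx ((1-t)*a + t*b) - xlogx ((1-t)*b + t*a)) / t"

definition vanishing_step :: "nat \<Rightarrow> real" where "vanishing_step n = 1 / (real n + 2)"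

lemma jeffreys_commute: "jeffreys a b = jeffreys b a"
  unfolding jeffreys_def by (auto simp: algebra_simps)

lemma jeffreys_quotient_commute: "jeffreys_quotient t a b = jeffreys_quotient t b a"
  unfolding jeffreys_quotient_def by (simp add: algebra_simps)

lemma borel_measurable_jeffreys[measurable (raw)]:
  assumes "r \<in> borel_measurable M" "s \<in> borel_measurable M"
  shows "(\<lambda>x. jeffreys (r x) (s x)) \<in> borel_measurable M"
  unfolding jeffreys_def using assms by measurable

lemma borel_measurable_jeffreys_quotient[measurable (raw)]:
  assumes "r \<in> borel_measurable M" "s \<in> borel_measurable M"
  shows "(\<lambda>x. jeffreys_quotient t (r x) (s x)) \<in> borel_measurable M"
  unfolding jeffreys_quotient_def using assms by measurable

lemma jeffreys_quotient_nonneg: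
  assumes "0 \<le> a" "0 \<le> b" "0 < t" "t \<le> 1"
  shows "0 \<le> jeffreys_quotient t a b"
proof -
  have "xlogx ((1-t)*a + t*b) \<le> (1-t) * xlogx a + t * xlogx b"
    and "xlogx ((1-t)*b + t*a) \<le> (1-t) * xlogx b + t * xlogx a"
    using xlogx_convex assms by auto
  then show ?thesis unfolding jeffreys_quotient_def using assms by (auto simp: algebra_simps)
qed

lemma vanishing_step_pos: "0 < vanishing_step n"
  and vanishing_step_le: "vanishing_step n \<le> 1/2"
  unfolding vanishing_step_def by (auto simp: field_simps)

lemma vanishing_step_tendsto: "filterlim vanishing_step (at 0) sequentially"
proof -
  have "vanishing_step \<longlonglongrightarrow> 0" unfolding vanishing_step_def by real_asymp
  then show ?thesis
    unfolding filterlim_at using vanishing_step_pos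
    by (auto intro!: always_eventually simp: less_imp_neq[symmetric])
qed

lemma jeffreys_quotient_tendsto:
  assumes a: "0 < a" and b: "0 < b"
  shows "((\<lambda>n. jeffreys_quotient (vanishing_step n) a b) \<longlongrightarrow> (b-a)*(ln b - ln a)) sequentially"
proof -
  define g where "g t = xlogx ((1-t)*a + t*b) + xlogx ((1-t)*b + t*a)" for t
  define g' where "g' = (ln a + 1)*(b-a) + (ln b + 1)*(a-b)"
  have "(g has_real_derivative g') (at 0)"
    unfolding g_def g'_def xlogx_def using a b
    by (auto intro!: derivative_eq_intros simp: field_simps)
  then have "((\<lambda>t. - ((g t - g 0) / (t - 0))) \<longlongrightarrow> - g') (at 0)"
    unfolding has_field_derivative_iff by (intro tendsto_intros)
  moreover have "- ((g t - g 0) / (t - 0)) = jeffreys_quotient t a b" for t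
    unfolding g_def jeffreys_quotient_def by (cases "t = 0") (simp_all add: field_simps)
  moreover have "- g' = (b-a)*(ln b - ln a)"
    unfolding g'_def by (simp add: algebra_simps)
  ultimately have "((\<lambda>t. jeffreys_quotient t a b) \<longlongrightarrow> (b-a)*(ln b - ln a)) (at 0)" by simp
  from filterlim_compose[OF this vanishing_step_tendsto] show ?thesis .
qed

lemma jeffreys_quotient_zero_ge:
  assumes b: "0 < b" and t: "0 < t" "t \<le> 1/2"
  shows "- b * ln t \<le> jeffreys_quotient t 0 b"
proof -
  have "(1-t) * b * ln (1-t) \<le> (1-t) * b * (- t)"
    using t b ln_le_minus_one[of "1-t"] by (intro mult_left_mono) auto
  also have "\<dots> \<le> 0" using t b by (simp add: mult_nonneg_nonneg)
  finally have h: "(1-t) * b * ln (1-t) \<le> 0" .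
  have "xlogx (t*b) = t*b*(ln t + ln b)" "xlogx ((1-t)*b) = (1-t)*b*(ln (1-t) + ln b)"
    using t b by (simp_all add: xlogx_def ln_mult)
  then have "jeffreys_quotient t 0 b = (- t*b* ln t - (1-t) * b * ln (1-t)) / t"
    unfolding jeffreys_quotient_def by (simp add: xlogx_def algebra_simps)
  also have "\<dots> \<ge> (- t*b* ln t) / t" using h t by (intro divide_right_mono) auto
  finally show ?thesis using t by simp
qed

lemma jeffreys_quotient_tendsto_top:
  assumes b: "0 < b"
  shows "filterlim (\<lambda>n. jeffreys_quotient (vanishing_step n) 0 b) at_top sequentially"
proof -
  have "b * ln (real n + 2) \<le> jeffreys_quotient (vanishing_step n) 0 b" for n
    using jeffreys_quotient_zero_ge[OF b vanishing_step_pos vanishing_step_le, of n]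
    by (simp add: vanishing_step_def ln_div)
  moreover have "filterlim (\<lambda>n. b * ln (real n + 2)) at_top sequentially"
    using b by real_asymp
  ultimately show ?thesis by (auto intro: filterlim_at_top_mono)
qed

lemma jeffreys_le_liminf_quotient:
  assumes a: "0 \<le> a" and b: "0 \<le> b"
  shows "jeffreys a b \<le> liminf (\<lambda>n. ennreal (jeffreys_quotient (vanishing_step n) a b))"
proof -
  have top: "liminf (\<lambda>n. ennreal (jeffreys_quotient (vanishing_step n) 0 b)) = \<top>" if "0 < b" for b
    using jeffreys_quotient_tendsto_top[OF that]
    by (intro lim_imp_Liminf) (auto simp: ennreal_tendsto_top_eq_at_top)
  consider "0 < a" "0 < b" | "a = b" | "a = 0" "0 < b" | "b = 0" "0 < a"
    using a b by linarith
  then show ?thesis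
  proof cases
    case 1
    then have "liminf (\<lambda>n. ennreal (jeffreys_quotient (vanishing_step n) a b)) = ennreal ((b-a)*(ln b - ln a))"
      using jeffreys_quotient_tendsto by (intro lim_imp_Liminf) auto
    then show ?thesis using 1 by (simp add: jeffreys_def)
  next
    case 2 then show ?thesis by (simp add: jeffreys_def)
  next
    case 3 then show ?thesis using top by simp
  next
    case 4 then show ?thesis using top[of a] by (simp add: jeffreys_quotient_commute)
  qed
qed

lemma integrable_xlogx_convex_comb:
  assumes "prob_space R" and [measurable]: "r \<in> borel_measurable R" "s \<in> borel_measurable R"
    and nn: "\<And>x. x \<in> space R \<Longrightarrow> 0 \<le> r x \<and> 0 \<le> s x"
    and ir: "integrable R (\<lambda>x. xlogx (r x))" and iss: "integrable R (\<lambda>x. xlogx (s x))"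
    and t: "0 \<le> t" "t \<le> 1"
  shows "integrable R (\<lambda>x. xlogx ((1-t) * r x + t * s x))"
proof -
  interpret prob_space R by fact
  have "integrable R (\<lambda>x. \<bar>xlogx (r x)\<bar> + \<bar>xlogx (s x)\<bar> + 1)"
    using ir iss by auto
  then show ?thesis
  proof (rule Bochner_Integration.integrable_bound)
    show "AE x in R. norm (xlogx ((1-t) * r x + t * s x)) \<le> norm (\<bar>xlogx (r x)\<bar> + \<bar>xlogx (s x)\<bar> + 1)"
    proof (rule AE_I2)
      fix x assume x: "x \<in> space R"
      have "xlogx ((1-t) * r x + t * s x) \<le> (1-t) * xlogx (r x) + t * xlogx (s x)"
        using xlogx_convex nn[OF x] t by auto
      also have "\<dots> \<le> \<bar>xlogx (r x)\<bar> + \<bar>xlogx (s x)\<bar>"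
        using t by (intro convex_bound_le) auto
      moreover have "0 \<le> (1-t) * r x + t * s x" using nn[OF x] t by auto
      then have "-1 \<le> xlogx ((1-t) * r x + t * s x)" using xlogx_ge by fastforce
      ultimately show "norm (xlogx ((1-t) * r x + t * s x)) \<le> norm (\<bar>xlogx (r x)\<bar> + \<bar>xlogx (s x)\<bar> + 1)"
        by auto
    qed
  qed measurable
qed

text \<open>The hypotheses are the first-order optimality conditions at \<open>r\<close> and at \<open>s\<close> in the
  direction of the other density; adding them bounds the averaged convexity defect.\<close>
lemma integral_jeffreys_quotient_le:
  assumes "prob_space R" and [measurable]: "r \<in> borel_measurable R" "s \<in> borel_measurable R"
    and nn: "\<And>x. x \<in> space R \<Longrightarrow> 0 \<le> r x \<and> 0 \<le> s x"
    and ir: "integrable R (\<lambda>x. xlogx (r x))" and iss: "integrable R (\<lambda>x. xlogx (s x))"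
    and t: "0 < t" "t \<le> 1"
    and hA: "(\<integral>x. xlogx (r x) \<partial>R) - t * A \<le> (\<integral>x. xlogx ((1-t) * r x + t * s x) \<partial>R)"
    and hB: "(\<integral>x. xlogx (s x) \<partial>R) - t * B \<le> (\<integral>x. xlogx ((1-t) * s x + t * r x) \<partial>R)"
  shows "(\<integral>\<^sup>+x. ennreal (jeffreys_quotient t (r x) (s x)) \<partial>R) \<le> ennreal (A + B)"
proof -
  have i1: "integrable R (\<lambda>x. xlogx ((1-t) * r x + t * s x))"
    using integrable_xlogx_convex_comb[OF assms(1-6)] t by auto
  have i2: "integrable R (\<lambda>x. xlogx ((1-t) * s x + t * r x))"
    using integrable_xlogx_convex_comb[OF assms(1,3,2) _ iss ir] nn t by auto
  have nonneg: "\<And>x. x \<in> space R \<Longrightarrow> 0 \<le> jeffreys_quotient t (r x) (s x)"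
    using jeffreys_quotient_nonneg nn t by auto
  have "(\<integral>x. jeffreys_quotient t (r x) (s x) \<partial>R) = ((\<integral>x. xlogx (r x) \<partial>R) + (\<integral>x. xlogx (s x) \<partial>R)
      - (\<integral>x. xlogx ((1-t) * r x + t * s x) \<partial>R) - (\<integral>x. xlogx ((1-t) * s x + t * r x) \<partial>R)) / t"
    unfolding jeffreys_quotient_def using ir iss i1 i2 by simp
  also have "\<dots> \<le> (t * A + t * B) / t"
    using hA hB t by (intro divide_right_mono) auto
  also have "\<dots> = A + B" using t by (simp add: field_simps)
  finally have "(\<integral>x. jeffreys_quotient t (r x) (s x) \<partial>R) \<le> A + B" .
  moreover have "integrable R (\<lambda>x. jeffreys_quotient t (r x) (s x))"
    unfolding jeffreys_quotient_def using ir iss i1 i2 by auto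
  ultimately show ?thesis
    using nonneg by (subst nn_integral_eq_integral) (auto intro!: AE_I2 ennreal_leI)
qed

lemma nn_integral_jeffreys_le:
  assumes "prob_space R" and [measurable]: "r \<in> borel_measurable R" "s \<in> borel_measurable R"
    and nn: "\<And>x. x \<in> space R \<Longrightarrow> 0 \<le> r x \<and> 0 \<le> s x"
    and ir: "integrable R (\<lambda>x. xlogx (r x))" and iss: "integrable R (\<lambda>x. xlogx (s x))"
    and hA: "\<And>t. 0 < t \<Longrightarrow> t \<le> 1 \<Longrightarrow>
      (\<integral>x. xlogx (r x) \<partial>R) - t * A \<le> (\<integral>x. xlogx ((1-t) * r x + t * s x) \<partial>R)"
    and hB: "\<And>t. 0 < t \<Longrightarrow> t \<le> 1 \<Longrightarrow>
      (\<integral>x. xlogx (s x) \<partial>R) - t * B \<le> (\<integral>x. xlogx ((1-t) * s x + t * r x) \<partial>R)"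
  shows "(\<integral>\<^sup>+x. jeffreys (r x) (s x) \<partial>R) \<le> ennreal (A + B)"
proof -
  let ?q = "\<lambda>n x. ennreal (jeffreys_quotient (vanishing_step n) (r x) (s x))"
  have "(\<integral>\<^sup>+x. jeffreys (r x) (s x) \<partial>R) \<le> (\<integral>\<^sup>+x. liminf (\<lambda>n. ?q n x) \<partial>R)"
    using nn by (intro nn_integral_mono) (auto intro!: jeffreys_le_liminf_quotient)
  also have "\<dots> \<le> liminf (\<lambda>n. \<integral>\<^sup>+x. ?q n x \<partial>R)"
    by (intro nn_integral_liminf) simp
  also have "\<dots> \<le> liminf (\<lambda>n. ennreal (A + B))"
    using vanishing_step_pos vanishing_step_le order_trans[OF vanishing_step_le]
    by (intro Liminf_mono always_eventually allI integral_jeffreys_quotient_le[OF assms(1-6)] hA hB)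
      auto
  finally show ?thesis by (simp add: Liminf_const)
qed

lemma KL_div_density:
  assumes "prob_space R" and [measurable]: "\<rho> \<in> borel_measurable R"
    and nn: "\<And>x. x \<in> space R \<Longrightarrow> 0 \<le> \<rho> x"
    and int: "integrable R (\<lambda>x. xlogx (\<rho> x))"
  shows "KL_div (density R \<rho>) R = ereal (\<integral>x. xlogx (\<rho> x) \<partial>R)"
proof -
  interpret prob_space R by fact
  have ac: "absolutely_continuous R (density R \<rho>)"
    by (rule absolutely_continuousI_density) measurable
  have "AE x in R. ennreal (\<rho> x) = RN_deriv R (density R \<rho>) x"
    by (rule RN_deriv_unique) auto
  then have ae: "AE x in R. enn2real (RN_deriv R (density R \<rho>) x) = \<rho> x"
    using AE_space by eventually_elim (metis enn2real_ennreal nn)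
  let ?f = "\<lambda>x. enn2real (RN_deriv R (density R \<rho>) x)"
  have P: "(\<integral>\<^sup>+x. ennreal (?f x * ln (?f x)) \<partial>R) = (\<integral>\<^sup>+x. ennreal (xlogx (\<rho> x)) \<partial>R)"
    and N: "(\<integral>\<^sup>+x. ennreal (- (?f x * ln (?f x))) \<partial>R) = (\<integral>\<^sup>+x. ennreal (- xlogx (\<rho> x)) \<partial>R)"
    using ae by (auto intro!: nn_integral_cong_AE elim!: AE_mp simp: xlogx_def)
  have fin: "(\<integral>\<^sup>+x. ennreal (xlogx (\<rho> x)) \<partial>R) \<noteq> \<infinity>" "(\<integral>\<^sup>+x. ennreal (- xlogx (\<rho> x)) \<partial>R) \<noteq> \<infinity>"
    using int unfolding real_integrable_def by auto
  have "KL_div (density R \<rho>) R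
      = enn2ereal (\<integral>\<^sup>+x. ennreal (xlogx (\<rho> x)) \<partial>R) - enn2ereal (\<integral>\<^sup>+x. ennreal (- xlogx (\<rho> x)) \<partial>R)"
    unfolding KL_div_def Let_def P N using ac by simp
  also have "\<dots> = ereal (enn2real (\<integral>\<^sup>+x. ennreal (xlogx (\<rho> x)) \<partial>R))
      - ereal (enn2real (\<integral>\<^sup>+x. ennreal (- xlogx (\<rho> x)) \<partial>R))"
    using fin by (simp add: ennreal_enn2real_if less_top[symmetric] flip: enn2ereal_ennreal)
  finally show ?thesis using real_lebesgue_integral_def[OF int] by simp
qed

lemma KL_div_finite_imp_density:
  assumes "prob_space R" "prob_space P" and sets: "sets P = sets R"
    and fin: "KL_div P R \<noteq> \<infinity>"
  defines "\<rho> \<equiv> \<lambda>x. enn2real (RN_deriv R P x)"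
  shows "P = density R \<rho>" and "integrable R (\<lambda>x. xlogx (\<rho> x))"
proof -
  interpret prob_space R by fact
  interpret P: prob_space P by fact
  have ac: "absolutely_continuous R P"
    using fin unfolding KL_div_def by (auto split: if_splits)
  have "AE x in R. RN_deriv R P x = ennreal (\<rho> x)"
    using RN_deriv_finite[OF _ ac sets] P.sigma_finite_measure_axioms
    unfolding \<rho>_def by (auto elim!: AE_mp intro!: AE_I2 simp: less_top ennreal_enn2real_if)
  then have "density R (RN_deriv R P) = density R \<rho>"
    by (intro density_cong) (auto simp: \<rho>_def)
  then show "P = density R \<rho>" using density_RN_deriv[OF ac sets] by simp
  have "- xlogx (\<rho> x) \<le> 1" for x
    using xlogx_ge[of "\<rho> x"] unfolding \<rho>_def by (smt (verit) enn2real_nonneg)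
  then have "(\<integral>\<^sup>+x. ennreal (- xlogx (\<rho> x)) \<partial>R) \<le> (\<integral>\<^sup>+x. 1 \<partial>R)"
    by (intro nn_integral_mono) (auto simp: ennreal_le_1)
  then have Nf: "(\<integral>\<^sup>+x. ennreal (- xlogx (\<rho> x)) \<partial>R) \<noteq> \<infinity>"
    using emeasure_space_1 by (auto simp: top_unique)
  have "KL_div P R = enn2ereal (\<integral>\<^sup>+x. ennreal (xlogx (\<rho> x)) \<partial>R) - enn2ereal (\<integral>\<^sup>+x. ennreal (- xlogx (\<rho> x)) \<partial>R)"
    unfolding KL_div_def Let_def using ac sets by (simp add: \<rho>_def xlogx_def)
  then have "(\<integral>\<^sup>+x. ennreal (xlogx (\<rho> x)) \<partial>R) \<noteq> \<infinity>"
    using fin Nf by (auto simp: ennreal_enn2real_if less_top[symmetric])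
  then show "integrable R (\<lambda>x. xlogx (\<rho> x))"
    unfolding real_integrable_def using Nf by (auto simp: \<rho>_def)
qed

definition density_ratio :: "real \<Rightarrow> real \<Rightarrow> real" where
  "density_ratio a b = (if 0 < b then a / b else 0)"

lemma borel_measurable_density_ratio[measurable (raw)]:
  assumes "r \<in> borel_measurable M" "s \<in> borel_measurable M"
  shows "(\<lambda>x. density_ratio (r x) (s x)) \<in> borel_measurable M"
  unfolding density_ratio_def using assms by measurable

lemma KL_div_density_density:
  assumes "prob_space R" and [measurable]: "r \<in> borel_measurable R" "s \<in> borel_measurable R"
    and nn: "\<And>x. x \<in> space R \<Longrightarrow> 0 \<le> r x \<and> 0 \<le> s x"
    and ps: "prob_space (density R s)"
    and zeros: "AE x in R. r x = 0 \<longleftrightarrow> s x = 0"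
    and int: "integrable R (\<lambda>x. s x * xlogx (density_ratio (r x) (s x)))"
  shows "KL_div (density R r) (density R s) = ereal (\<integral>x. s x * xlogx (density_ratio (r x) (s x)) \<partial>R)"
proof -
  let ?S = "density R s" and ?q = "\<lambda>x. density_ratio (r x) (s x)"
  have "density ?S ?q = density R (\<lambda>x. ennreal (s x) * ennreal (?q x))"
    by (rule density_density_eq) auto
  also have "\<dots> = density R r"
  proof (rule density_cong)
    show "AE x in R. ennreal (s x) * ennreal (?q x) = ennreal (r x)"
      using zeros AE_space
    proof eventually_elim
      case (elim x)
      then show ?case using nn[of x]
        by (cases "0 < s x") (auto simp: density_ratio_def ennreal_mult[symmetric])
    qed
  qed auto
  finally have eq: "density ?S ?q = density R r" .
  have "KL_div (density ?S ?q) ?S = ereal (\<integral>x. xlogx (?q x) \<partial>?S)"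
    using int nn by (intro KL_div_density[OF ps]) (auto simp: density_ratio_def integrable_density)
  also have "(\<integral>x. xlogx (?q x) \<partial>?S) = (\<integral>x. s x * xlogx (?q x) \<partial>R)"
    using nn by (subst integral_density) (auto intro!: AE_I2)
  finally show ?thesis unfolding eq .
qed

lemma density_ratio_xlogx_ge: "0 \<le> a \<Longrightarrow> 0 \<le> b \<Longrightarrow> - b \<le> b * xlogx (density_ratio a b)"
proof (cases "0 < b")
  case True
  assume a: "0 \<le> a"
  have "b * (a / b - 1) \<le> b * xlogx (a / b)"
    using xlogx_ge a True by (intro mult_left_mono) auto
  then show ?thesis using True a by (simp add: density_ratio_def right_diff_distrib)
qed (simp add: density_ratio_def)

lemma jeffreys_finite_cases:
  assumes "jeffreys a b \<noteq> \<infinity>" "0 \<le> a" "0 \<le> b"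
  shows "(0 < a \<and> 0 < b) \<or> (a = 0 \<and> b = 0)"
  using assms by (auto simp: jeffreys_def split: if_splits)

lemma density_ratio_xlogx_sum:
  assumes "(0 < a \<and> 0 < b) \<or> (a = 0 \<and> b = 0)"
  shows "b * xlogx (density_ratio a b) + a * xlogx (density_ratio b a) = enn2real (jeffreys a b)"
  using assms
proof
  assume ab: "0 < a \<and> 0 < b"
  then have "0 \<le> (b-a)*(ln b - ln a)"
    by (cases "a \<le> b") (auto intro: mult_nonneg_nonneg mult_nonpos_nonpos)
  moreover have "b * xlogx (density_ratio a b) + a * xlogx (density_ratio b a) = (b-a)*(ln b - ln a)"
    using ab by (simp add: density_ratio_def xlogx_def ln_div algebra_simps)
  ultimately show ?thesis using ab by (simp add: jeffreys_def)
qed (simp add: density_ratio_def jeffreys_def)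

lemma abs_density_ratio_xlogx_le:
  assumes "(0 < a \<and> 0 < b) \<or> (a = 0 \<and> b = 0)"
  shows "\<bar>b * xlogx (density_ratio a b)\<bar> \<le> enn2real (jeffreys a b) + a + b"
  using density_ratio_xlogx_sum[OF assms] density_ratio_xlogx_ge[of a b] density_ratio_xlogx_ge[of b a]
    enn2real_nonneg[of "jeffreys a b"] assms
  by linarith

lemma integrable_of_prob_space_density:
  assumes [measurable]: "f \<in> borel_measurable R" and nn: "\<And>x. x \<in> space R \<Longrightarrow> 0 \<le> f x"
    and "prob_space (density R f)"
  shows "integrable R f"
proof (rule integrableI_nonneg)
  have "(\<integral>\<^sup>+x. ennreal (f x) \<partial>R) = emeasure (density R f) (space R)"
    by (subst emeasure_density) (auto intro!: nn_integral_cong)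
  then show "(\<integral>\<^sup>+x. ennreal (f x) \<partial>R) < \<infinity>"
    using prob_space.emeasure_space_1[OF assms(3)] by simp
qed (use nn in \<open>auto intro!: AE_I2\<close>)

lemma KL_div_symmetrized_eq:
  assumes "prob_space R" and [measurable]: "r \<in> borel_measurable R" "s \<in> borel_measurable R"
    and nn: "\<And>x. x \<in> space R \<Longrightarrow> 0 \<le> r x \<and> 0 \<le> s x"
    and pr: "prob_space (density R r)" and ps: "prob_space (density R s)"
    and fin: "(\<integral>\<^sup>+x. jeffreys (r x) (s x) \<partial>R) \<noteq> \<infinity>"
  shows "KL_div (density R r) (density R s) + KL_div (density R s) (density R r)
    = enn2ereal (\<integral>\<^sup>+x. jeffreys (r x) (s x) \<partial>R)"
proof -
  interpret prob_space R by fact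
  let ?k = "\<lambda>x. enn2real (jeffreys (r x) (s x))"
  let ?v1 = "\<lambda>x. s x * xlogx (density_ratio (r x) (s x))"
  let ?v2 = "\<lambda>x. r x * xlogx (density_ratio (s x) (r x))"
  have finite: "AE x in R. jeffreys (r x) (s x) \<noteq> \<infinity>"
    by (rule nn_integral_PInf_AE[OF _ fin]) measurable
  then have nn_jeffreys: "(\<integral>\<^sup>+x. jeffreys (r x) (s x) \<partial>R) = (\<integral>\<^sup>+x. ennreal (?k x) \<partial>R)"
    by (intro nn_integral_cong_AE) (auto elim!: AE_mp simp: ennreal_enn2real_if)
  have same_zeros: "AE x in R. (0 < r x \<and> 0 < s x) \<or> (r x = 0 \<and> s x = 0)"
    using finite AE_space by eventually_elim (metis jeffreys_finite_cases nn)
  have ik: "integrable R ?k"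
    using fin unfolding nn_jeffreys by (intro integrableI_nonneg) (auto simp: less_top)
  have bnd: "integrable R (\<lambda>x. ?k x + r x + s x)"
    using ik integrable_of_prob_space_density[OF _ _ pr] integrable_of_prob_space_density[OF _ _ ps] nn
    by auto
  have "AE x in R. norm (?v1 x) \<le> norm (?k x + r x + s x) \<and> norm (?v2 x) \<le> norm (?k x + r x + s x)"
    using same_zeros
  proof eventually_elim
    case (elim x)
    then have swapped: "(0 < s x \<and> 0 < r x) \<or> (s x = 0 \<and> r x = 0)" by auto
    show ?case
      using abs_density_ratio_xlogx_le[OF elim] abs_density_ratio_xlogx_le[OF swapped] elim
        enn2real_nonneg[of "jeffreys (r x) (s x)"]
      by (auto simp: jeffreys_commute)
  qed
  then have i1: "integrable R ?v1" and i2: "integrable R ?v2"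
    using bnd by (auto intro: Bochner_Integration.integrable_bound elim: AE_mp)
  have "AE x in R. r x = 0 \<longleftrightarrow> s x = 0" using same_zeros by eventually_elim auto
  moreover have "AE x in R. s x = 0 \<longleftrightarrow> r x = 0" using same_zeros by eventually_elim auto
  ultimately have "KL_div (density R r) (density R s) + KL_div (density R s) (density R r)
      = ereal ((\<integral>x. ?v1 x \<partial>R) + (\<integral>x. ?v2 x \<partial>R))"
    using KL_div_density_density[OF assms(1-4) ps _ i1] KL_div_density_density[OF assms(1,3,2) _ pr _ i2]
      nn by simp
  also have "(\<integral>x. ?v1 x \<partial>R) + (\<integral>x. ?v2 x \<partial>R) = (\<integral>x. ?k x \<partial>R)"
  proof -
    have "AE x in R. ?v1 x + ?v2 x = ?k x"
      using same_zeros by eventually_elim (rule density_ratio_xlogx_sum)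
    then show ?thesis
      using i1 i2 by (simp flip: Bochner_Integration.integral_add add: integral_cong_AE)
  qed
  also have "ereal (\<integral>x. ?k x \<partial>R) = enn2ereal (\<integral>\<^sup>+x. jeffreys (r x) (s x) \<partial>R)"
    unfolding nn_jeffreys using ik by (simp add: nn_integral_eq_integral flip: enn2ereal_ennreal)
  finally show ?thesis .
qed

lemma KL_div_symmetrized_le:
  assumes "prob_space R" and [measurable]: "r \<in> borel_measurable R" "s \<in> borel_measurable R"
    and nn: "\<And>x. x \<in> space R \<Longrightarrow> 0 \<le> r x \<and> 0 \<le> s x"
    and pr: "prob_space (density R r)" and ps: "prob_space (density R s)"
    and ir: "integrable R (\<lambda>x. xlogx (r x))" and iss: "integrable R (\<lambda>x. xlogx (s x))"
    and hA: "\<And>t. 0 < t \<Longrightarrow> t \<le> 1 \<Longrightarrow>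
      (\<integral>x. xlogx (r x) \<partial>R) - t * A \<le> (\<integral>x. xlogx ((1-t) * r x + t * s x) \<partial>R)"
    and hB: "\<And>t. 0 < t \<Longrightarrow> t \<le> 1 \<Longrightarrow>
      (\<integral>x. xlogx (s x) \<partial>R) - t * B \<le> (\<integral>x. xlogx ((1-t) * s x + t * r x) \<partial>R)"
  shows "KL_div (density R r) (density R s) + KL_div (density R s) (density R r) \<le> ereal (A + B)"
proof -
  have bnd: "(\<integral>\<^sup>+x. jeffreys (r x) (s x) \<partial>R) \<le> ennreal (A + B)"
    by (rule nn_integral_jeffreys_le[OF assms(1-4) ir iss hA hB])
  have "0 \<le> A + B" using hA[of 1] hB[of 1] by simp
  then have "enn2ereal (\<integral>\<^sup>+x. jeffreys (r x) (s x) \<partial>R) \<le> ereal (A + B)"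
    using bnd by (metis enn2ereal_ennreal less_eq_ennreal.rep_eq)
  moreover have "(\<integral>\<^sup>+x. jeffreys (r x) (s x) \<partial>R) \<noteq> \<infinity>"
    using bnd by (auto simp: top_unique)
  ultimately show ?thesis by (simp add: KL_div_symmetrized_eq[OF assms(1-6)])
qed

lemma space_metric_borel: "Metric_space S d \<Longrightarrow> space (metric_borel S d) = S"
  unfolding metric_borel_def borel_of_def
  by (simp add: space_measure_of_conv Metric_space.topspace_mtopology)

lemma continuous_map_dist_point:
  assumes "Metric_space S d" "a \<in> S"
  shows "continuous_map (Metric_space.mtopology S d) euclideanreal (\<lambda>y. d y a)"
proof -
  interpret Metric_space S d by fact
  have "continuous_map (mtopology_of (metric (S, d))) euclideanreal (mdist (metric (S, d)) a)"
    using assms by (intro continuous_on_mdist) (simp add: Metric_space_axioms)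
  moreover have "mdist (metric (S, d)) a = (\<lambda>y. d y a)"
    by (simp add: Metric_space_axioms commute fun_eq_iff)
  ultimately show ?thesis
    by (simp add: mtopology_of_def Metric_space_axioms)
qed

lemma borel_measurable_borel_of:
  assumes "continuous_map T euclidean f"
  shows "f \<in> borel_measurable (borel_of T)"
proof (rule borel_measurableI)
  fix U :: "'b set" assume "open U"
  then have "openin T (f -` U \<inter> topspace T)"
    using openin_continuous_map_preimage[OF assms] by (simp add: Int_commute vimage_def Collect_conj_eq)
  moreover have "{U. openin T U} \<subseteq> Pow (topspace T)" using openin_subset by auto
  ultimately show "f -` U \<inter> space (borel_of T) \<in> sets (borel_of T)"
    unfolding borel_of_def by (simp add: space_measure_of_conv sets_measure_of sigma_sets.Basic)
qed

lemma powr_add_le: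
  fixes a b q :: real
  assumes "0 \<le> a" "0 \<le> b" "0 \<le> q"
  shows "(a + b) powr q \<le> 2 powr q * (a powr q + b powr q)"
proof -
  have "(a + b) powr q \<le> (2 * max a b) powr q"
    using assms by (intro powr_mono2) auto
  also have "\<dots> = 2 powr q * max a b powr q" using assms by (simp add: powr_mult)
  also have "\<dots> \<le> 2 powr q * (a powr q + b powr q)"
    by (intro mult_left_mono) (auto simp: max_def)
  finally show ?thesis .
qed

lemma integrable_dist_powr_P_p:
  assumes ms: "Metric_space S d" and mu: "P_p p S d \<mu>" and p: "1 \<le> p" "p \<noteq> \<infinity>" and a: "a \<in> S"
  shows "integrable \<mu> (\<lambda>y. d y a powr real_of_ereal p)"
proof -
  interpret Metric_space S d by fact
  define q where "q = real_of_ereal p"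
  have q: "0 \<le> q" unfolding q_def using p by (cases p) auto
  have sets: "sets \<mu> = sets (metric_borel S d)" and "prob_space \<mu>" using mu by (auto simp: P_p_def)
  interpret prob_space \<mu> by fact
  have space: "space \<mu> = S" using sets_eq_imp_space_eq[OF sets] space_metric_borel[OF ms] by simp
  have dist_meas[measurable]: "(\<lambda>y. d y b) \<in> borel_measurable \<mu>" if "b \<in> S" for b
    unfolding measurable_cong_sets[OF sets refl] metric_borel_def
    by (intro borel_measurable_borel_of continuous_map_dist_point[OF ms that])
  obtain x0 where x0: "x0 \<in> S" and fin: "(\<integral>\<^sup>+ y. ennreal (d y x0 powr q) \<partial>\<mu>) < \<infinity>"
    using mu p unfolding P_p_def q_def by auto
  have "integrable \<mu> (\<lambda>y. d y x0 powr q)"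
    using fin dist_meas[OF x0] by (intro integrableI_nonneg) auto
  then have "integrable \<mu> (\<lambda>y. 2 powr q * (d y x0 powr q + d x0 a powr q))" by auto
  then show ?thesis unfolding q_def[symmetric]
  proof (rule Bochner_Integration.integrable_bound)
    show "AE y in \<mu>. norm (d y a powr q) \<le> norm (2 powr q * (d y x0 powr q + d x0 a powr q))"
    proof (rule AE_I2)
      fix y assume "y \<in> space \<mu>"
      then have y: "y \<in> S" using space by simp
      have "d y a powr q \<le> (d y x0 + d x0 a) powr q"
        using triangle[OF y x0 a] q by (intro powr_mono2) auto
      also have "\<dots> \<le> 2 powr q * (d y x0 powr q + d x0 a powr q)"
        using q y x0 a by (intro powr_add_le) auto
      finally show "norm (d y a powr q) \<le> norm (2 powr q * (d y x0 powr q + d x0 a powr q))"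
        by simp
    qed
  qed (use dist_meas[OF a] in measurable)
qed

lemma space_PiM_metric_borel:
  assumes polish: "\<And>i. i < N \<Longrightarrow> polish_metric (S i) (d i)"
    and mu: "\<And>i. i < N \<Longrightarrow> P_p p (S i) (d i) (\<mu> i)"
  shows "space (\<Pi>\<^sub>M i\<in>{..<N}. \<mu> i) = (\<Pi>\<^sub>E i\<in>{..<N}. S i)"
proof -
  have "space (\<mu> i) = S i" if "i < N" for i
    using sets_eq_imp_space_eq[of "\<mu> i" "metric_borel (S i) (d i)"] mu[OF that] polish[OF that]
      space_metric_borel[of "S i" "d i"] by (auto simp: P_p_def polish_metric_def)
  then show ?thesis unfolding space_PiM by (intro PiE_cong) auto
qed

lemma integrable_coupling_growth:
  assumes polish: "\<And>i. i < N \<Longrightarrow> polish_metric (S i) (d i)"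
    and p: "1 \<le> p"
    and mu: "\<And>i. i < N \<Longrightarrow> P_p p (S i) (d i) (\<mu> i)"
    and c_meas: "c \<in> borel_measurable (\<Pi>\<^sub>M i\<in>{..<N}. \<mu> i)"
    and growth: "growth_p p N S d c"
    and coupling: "\<pi> \<in> couplings N \<mu>"
  shows "integrable \<pi> c"
proof -
  have "prob_space \<pi>" and sets: "sets \<pi> = sets (\<Pi>\<^sub>M i\<in>{..<N}. \<mu> i)"
    and marg: "\<And>i. i < N \<Longrightarrow> distr \<pi> (\<mu> i) (\<lambda>x. x i) = \<mu> i"
    using coupling by (auto simp: couplings_def)
  interpret prob_space \<pi> by fact
  have space: "space \<pi> = (\<Pi>\<^sub>E i\<in>{..<N}. S i)"
    using sets_eq_imp_space_eq[OF sets] space_PiM_metric_borel[OF polish mu] by simp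
  have cm[measurable]: "c \<in> borel_measurable \<pi>"
    unfolding measurable_cong_sets[OF sets refl] by (rule c_meas)
  show ?thesis
  proof (cases "p = \<infinity>")
    case True
    then obtain C where "\<And>x. x \<in> (\<Pi>\<^sub>E i\<in>{..<N}. S i) \<Longrightarrow> \<bar>c x\<bar> \<le> C"
      using growth unfolding growth_p_def by auto
    then show ?thesis
      by (intro integrable_const_bound[where B=C]) (auto simp: space intro!: AE_I2)
  next
    case False
    define q where "q = real_of_ereal p"
    obtain C xh where xh: "xh \<in> (\<Pi>\<^sub>E i\<in>{..<N}. S i)"
      and C: "\<And>x. x \<in> (\<Pi>\<^sub>E i\<in>{..<N}. S i) \<Longrightarrow> \<bar>c x\<bar> \<le> C * (1 + dXp_pow N d q x xh)"
      using growth False unfolding growth_p_def q_def by (simp only: if_False) blast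
    have "integrable \<pi> (\<lambda>x. d i (x i) (xh i) powr q)" if i: "i < N" for i
    proof -
      have "Metric_space (S i) (d i)" using polish[OF i] by (simp add: polish_metric_def)
      then have mi: "integrable (\<mu> i) (\<lambda>y. d i y (xh i) powr q)"
        unfolding q_def using integrable_dist_powr_P_p[OF _ mu[OF i] p False] xh i by auto
      have proj: "(\<lambda>x. x i) \<in> measurable \<pi> (\<mu> i)"
        unfolding measurable_cong_sets[OF sets refl] using i by (intro measurable_component_singleton) auto
      show ?thesis
        using mi marg[OF i] integrable_distr_eq[OF proj borel_measurable_integrable[OF mi]] by simp
    qed
    then have "integrable \<pi> (\<lambda>x. C * (1 + dXp_pow N d q x xh))"
      unfolding dXp_pow_def by (intro integrable_mult_right Bochner_Integration.integrable_add integrable_sum) auto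
    then show ?thesis
      by (rule Bochner_Integration.integrable_bound)
        (use C in \<open>auto simp: space intro!: AE_I2 order_trans[OF _ abs_ge_self]\<close>)
  qed
qed

lemma emeasure_density_convex_comb:
  fixes r s :: "'b \<Rightarrow> real" and t :: real
  assumes [measurable]: "r \<in> borel_measurable R" "s \<in> borel_measurable R"
    and nn: "\<And>x. x \<in> space R \<Longrightarrow> 0 \<le> r x \<and> 0 \<le> s x" and t: "0 \<le> t" "t \<le> 1"
    and A: "A \<in> sets R"
  shows "emeasure (density R (\<lambda>x. (1-t) * r x + t * s x)) A
      = ennreal (1-t) * emeasure (density R r) A + ennreal t * emeasure (density R s) A"
proof -
  have "emeasure (density R (\<lambda>x. (1-t) * r x + t * s x)) A
      = (\<integral>\<^sup>+x. ennreal (1-t) * (ennreal (r x) * indicator A x) + ennreal t * (ennreal (s x) * indicator A x) \<partial>R)"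
    using A nn t by (auto simp: emeasure_density ennreal_plus ennreal_mult distrib_right mult.assoc
        intro!: nn_integral_cong)
  then show ?thesis
    using A by (simp add: emeasure_density nn_integral_add nn_integral_cmult)
qed

context
  fixes N :: nat and \<mu> :: "nat \<Rightarrow> 'a measure"
  assumes prob_space_marginal: "\<And>i. i < N \<Longrightarrow> prob_space (\<mu> i)"
begin

abbreviation independent_coupling :: "(nat \<Rightarrow> 'a) measure"
  where "independent_coupling \<equiv> \<Pi>\<^sub>M i\<in>{..<N}. \<mu> i"

lemma prob_space_independent_coupling: "prob_space independent_coupling"
  by (rule prob_space_PiM) (use prob_space_marginal in auto)

lemma independent_coupling_in_couplings: "independent_coupling \<in> couplings N \<mu>"
  unfolding couplings_def
  using prob_space_independent_coupling distr_PiM_component[of "{..<N}" \<mu>] prob_space_marginal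
  by auto

lemma emeasure_coupling_vimage:
  assumes "P \<in> couplings N \<mu>" "i < N" "A \<in> sets (\<mu> i)"
  shows "emeasure P ((\<lambda>x. x i) -` A \<inter> space independent_coupling) = emeasure (\<mu> i) A"
proof -
  have sets: "sets P = sets independent_coupling" using assms(1) by (simp add: couplings_def)
  have "(\<lambda>x. x i) \<in> measurable P (\<mu> i)"
    unfolding measurable_cong_sets[OF sets refl] using assms(2) by (intro measurable_component_singleton) auto
  then have "emeasure (distr P (\<mu> i) (\<lambda>x. x i)) A = emeasure P ((\<lambda>x. x i) -` A \<inter> space independent_coupling)"
    using assms(3) sets_eq_imp_space_eq[OF sets] by (simp add: emeasure_distr)
  then show ?thesis using assms(1,2) by (simp add: couplings_def)
qed

lemma density_convex_comb_in_couplings: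
  fixes r s :: "(nat \<Rightarrow> 'a) \<Rightarrow> real" and t :: real
  assumes [measurable]: "r \<in> borel_measurable independent_coupling" "s \<in> borel_measurable independent_coupling"
    and nn: "\<And>x. x \<in> space independent_coupling \<Longrightarrow> 0 \<le> r x \<and> 0 \<le> s x" and t: "0 \<le> t" "t \<le> 1"
    and cr: "density independent_coupling r \<in> couplings N \<mu>"
    and cs: "density independent_coupling s \<in> couplings N \<mu>"
  shows "density independent_coupling (\<lambda>x. (1-t) * r x + t * s x) \<in> couplings N \<mu>"
proof -
  let ?M = "density independent_coupling (\<lambda>x. (1-t) * r x + t * s x)"
  have one: "ennreal (1-t) + ennreal t = 1" using t by (simp flip: ennreal_plus)
  have mix: "\<And>A. A \<in> sets independent_coupling \<Longrightarrow> emeasure ?M A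
      = ennreal (1-t) * emeasure (density independent_coupling r) A
        + ennreal t * emeasure (density independent_coupling s) A"
    by (rule emeasure_density_convex_comb) (use nn t in auto)
  have "prob_space ?M"
  proof
    have "emeasure (density independent_coupling f) (space independent_coupling) = 1"
      if "density independent_coupling f \<in> couplings N \<mu>" for f
      using prob_space.emeasure_space_1[of "density independent_coupling f"] that
      unfolding couplings_def by simp
    then show "emeasure ?M (space ?M) = 1"
      using mix[of "space independent_coupling"] cr cs one by simp
  qed
  moreover have "distr ?M (\<mu> i) (\<lambda>x. x i) = \<mu> i" if i: "i < N" for i
  proof (rule measure_eqI)
    fix A assume "A \<in> sets (distr ?M (\<mu> i) (\<lambda>x. x i))"
    then have A: "A \<in> sets (\<mu> i)" by simp
    have meas: "(\<lambda>x. x i) \<in> measurable independent_coupling (\<mu> i)"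
      using i by (intro measurable_component_singleton) auto
    have "emeasure (distr ?M (\<mu> i) (\<lambda>x. x i)) A = emeasure ?M ((\<lambda>x. x i) -` A \<inter> space independent_coupling)"
      using meas A by (simp add: emeasure_distr)
    also have "\<dots> = (ennreal (1-t) + ennreal t) * emeasure (\<mu> i) A"
      using mix[OF measurable_sets[OF meas A]] emeasure_coupling_vimage[OF cr i A]
        emeasure_coupling_vimage[OF cs i A]
      by (simp add: distrib_right)
    finally show "emeasure (distr ?M (\<mu> i) (\<lambda>x. x i)) A = emeasure (\<mu> i) A" using one by simp
  qed simp
  ultimately show ?thesis unfolding couplings_def by auto
qed

lemma ent_obj_density:
  assumes [measurable]: "\<rho> \<in> borel_measurable independent_coupling" "c \<in> borel_measurable independent_coupling"
    and nn: "\<And>x. x \<in> space independent_coupling \<Longrightarrow> 0 \<le> \<rho> x"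
    and cnn: "\<And>x. x \<in> space independent_coupling \<Longrightarrow> 0 \<le> c x"
    and ix: "integrable independent_coupling (\<lambda>x. xlogx (\<rho> x))"
    and ic: "integrable (density independent_coupling \<rho>) c"
  shows "ent_obj N \<mu> c (density independent_coupling \<rho>)
     = ereal ((\<integral>x. c x \<partial>density independent_coupling \<rho>) + (\<integral>x. xlogx (\<rho> x) \<partial>independent_coupling))"
proof -
  have "(\<integral>\<^sup>+x. ennreal (c x) \<partial>density independent_coupling \<rho>) = ennreal (\<integral>x. c x \<partial>density independent_coupling \<rho>)"
    using ic cnn by (intro nn_integral_eq_integral) (auto intro!: AE_I2)
  moreover have "0 \<le> (\<integral>x. c x \<partial>density independent_coupling \<rho>)"
    using cnn by (intro integral_nonneg_AE AE_I2) auto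
  ultimately show ?thesis
    unfolding ent_obj_def using KL_div_density[OF prob_space_independent_coupling assms(1) nn ix]
    by simp
qed

lemma ent_optimizer_density:
  assumes [measurable]: "c \<in> borel_measurable independent_coupling"
    and cnn: "\<And>x. x \<in> space independent_coupling \<Longrightarrow> 0 \<le> c x"
    and ic: "integrable independent_coupling c"
    and opt: "is_ent_optimizer N \<mu> c \<pi>"
  obtains \<rho> where "\<rho> \<in> borel_measurable independent_coupling" "\<And>x. 0 \<le> \<rho> x"
    "\<pi> = density independent_coupling \<rho>" "integrable independent_coupling (\<lambda>x. xlogx (\<rho> x))"
proof -
  have "ent_obj N \<mu> c \<pi> \<le> ent_obj N \<mu> c independent_coupling"
    using opt independent_coupling_in_couplings
    unfolding is_ent_optimizer_def S_ent_def by (auto intro: INF_lower)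
  also have "ent_obj N \<mu> c independent_coupling = ereal ((\<integral>x. c x \<partial>independent_coupling) + 0)"
    using ent_obj_density[of "\<lambda>_. 1" c] ic cnn by (simp add: density_1 xlogx_def)
  finally have "KL_div \<pi> independent_coupling \<noteq> \<infinity>"
    unfolding ent_obj_def by auto
  moreover have "prob_space \<pi>" "sets \<pi> = sets independent_coupling"
    using opt by (auto simp: is_ent_optimizer_def couplings_def)
  ultimately show ?thesis
    using KL_div_finite_imp_density[OF prob_space_independent_coupling]
    by (intro that[of "\<lambda>x. enn2real (RN_deriv independent_coupling \<pi> x)"]) auto
qed

lemma ent_optimizer_first_order:
  assumes [measurable]: "c \<in> borel_measurable independent_coupling"
    "r \<in> borel_measurable independent_coupling" "s \<in> borel_measurable independent_coupling"
    and cnn: "\<And>x. x \<in> space independent_coupling \<Longrightarrow> 0 \<le> c x"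
    and nn: "\<And>x. x \<in> space independent_coupling \<Longrightarrow> 0 \<le> r x \<and> 0 \<le> s x"
    and ic: "\<And>P. P \<in> couplings N \<mu> \<Longrightarrow> integrable P c"
    and opt: "is_ent_optimizer N \<mu> c (density independent_coupling r)"
    and cs: "density independent_coupling s \<in> couplings N \<mu>"
    and ir: "integrable independent_coupling (\<lambda>x. xlogx (r x))"
    and iss: "integrable independent_coupling (\<lambda>x. xlogx (s x))"
    and t: "0 < t" "t \<le> 1"
  shows "(\<integral>x. xlogx (r x) \<partial>independent_coupling)
      - t * ((\<integral>x. c x \<partial>density independent_coupling s) - (\<integral>x. c x \<partial>density independent_coupling r))
    \<le> (\<integral>x. xlogx ((1-t) * r x + t * s x) \<partial>independent_coupling)"
proof -
  let ?R = independent_coupling and ?m = "\<lambda>x. (1-t) * r x + t * s x"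
  have cr: "density ?R r \<in> couplings N \<mu>" using opt by (simp add: is_ent_optimizer_def)
  have cm: "density ?R ?m \<in> couplings N \<mu>"
    by (rule density_convex_comb_in_couplings) (use nn t cr cs in auto)
  have m_nn: "\<And>x. x \<in> space ?R \<Longrightarrow> 0 \<le> ?m x" using nn t by auto
  have im: "integrable ?R (\<lambda>x. xlogx (?m x))"
    using integrable_xlogx_convex_comb[OF prob_space_independent_coupling _ _ nn ir iss] t by auto
  have irc: "integrable ?R (\<lambda>x. r x * c x)" and isc: "integrable ?R (\<lambda>x. s x * c x)"
    using ic[OF cr] ic[OF cs] nn by (auto simp: integrable_density)
  have "(\<integral>x. c x \<partial>density ?R ?m) = (\<integral>x. ?m x * c x \<partial>?R)"
    using m_nn by (subst integral_density) (auto intro!: AE_I2)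
  also have "\<dots> = (1-t) * (\<integral>x. r x * c x \<partial>?R) + t * (\<integral>x. s x * c x \<partial>?R)"
    using irc isc by (simp add: distrib_right mult.assoc)
  also have "\<dots> = (1-t) * (\<integral>x. c x \<partial>density ?R r) + t * (\<integral>x. c x \<partial>density ?R s)"
    using nn by (simp add: integral_density AE_I2)
  finally have cost_mix: "(\<integral>x. c x \<partial>density ?R ?m)
      = (1-t) * (\<integral>x. c x \<partial>density ?R r) + t * (\<integral>x. c x \<partial>density ?R s)" .
  have "ent_obj N \<mu> c (density ?R r) \<le> ent_obj N \<mu> c (density ?R ?m)"
    using opt cm unfolding is_ent_optimizer_def S_ent_def by (auto intro: INF_lower)
  also have "ent_obj N \<mu> c (density ?R ?m)
      = ereal ((\<integral>x. c x \<partial>density ?R ?m) + (\<integral>x. xlogx (?m x) \<partial>?R))"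
    using ent_obj_density[OF _ _ m_nn cnn im ic[OF cm]] by simp
  finally show ?thesis
    using ent_obj_density[OF _ _ _ cnn ir ic[OF cr]] nn cost_mix by (simp add: algebra_simps)
qed

lemma ent_optimizers_symmetrized_KL_le:
  assumes [measurable]: "c \<in> borel_measurable independent_coupling" "ct \<in> borel_measurable independent_coupling"
    and cnn: "\<And>x. x \<in> space independent_coupling \<Longrightarrow> 0 \<le> c x"
    and ctnn: "\<And>x. x \<in> space independent_coupling \<Longrightarrow> 0 \<le> ct x"
    and ic: "\<And>P. P \<in> couplings N \<mu> \<Longrightarrow> integrable P c"
    and ict: "\<And>P. P \<in> couplings N \<mu> \<Longrightarrow> integrable P ct"
    and opt: "is_ent_optimizer N \<mu> c \<pi>" and opt_t: "is_ent_optimizer N \<mu> ct \<pi>t"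
  shows "KL_div \<pi> \<pi>t + KL_div \<pi>t \<pi>
    \<le> ereal (((\<integral>x. c x \<partial>\<pi>t) - (\<integral>x. c x \<partial>\<pi>)) + ((\<integral>x. ct x \<partial>\<pi>) - (\<integral>x. ct x \<partial>\<pi>t)))"
proof -
  let ?R = independent_coupling
  have cpl: "\<pi> \<in> couplings N \<mu>" "\<pi>t \<in> couplings N \<mu>"
    using opt opt_t by (auto simp: is_ent_optimizer_def)
  obtain r where r[measurable]: "r \<in> borel_measurable ?R" and r_nn: "\<And>x. 0 \<le> r x"
    and \<pi>: "\<pi> = density ?R r" and ir: "integrable ?R (\<lambda>x. xlogx (r x))"
    using ent_optimizer_density[OF assms(1) cnn ic[OF independent_coupling_in_couplings] opt] by blast
  obtain s where s[measurable]: "s \<in> borel_measurable ?R" and s_nn: "\<And>x. 0 \<le> s x"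
    and \<pi>t: "\<pi>t = density ?R s" and iss: "integrable ?R (\<lambda>x. xlogx (s x))"
    using ent_optimizer_density[OF assms(2) ctnn ict[OF independent_coupling_in_couplings] opt_t] by blast
  have "(\<integral>x. xlogx (r x) \<partial>?R) - t * ((\<integral>x. c x \<partial>\<pi>t) - (\<integral>x. c x \<partial>\<pi>))
      \<le> (\<integral>x. xlogx ((1-t) * r x + t * s x) \<partial>?R)" if "0 < t" "t \<le> 1" for t
    unfolding \<pi> \<pi>t using that r_nn s_nn cpl(2)[unfolded \<pi>t]
    by (intro ent_optimizer_first_order[OF _ r s cnn _ ic opt[unfolded \<pi>] _ ir iss]) auto
  moreover have "(\<integral>x. xlogx (s x) \<partial>?R) - t * ((\<integral>x. ct x \<partial>\<pi>) - (\<integral>x. ct x \<partial>\<pi>t))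
      \<le> (\<integral>x. xlogx ((1-t) * s x + t * r x) \<partial>?R)" if "0 < t" "t \<le> 1" for t
    unfolding \<pi> \<pi>t using that r_nn s_nn cpl(1)[unfolded \<pi>]
    by (intro ent_optimizer_first_order[OF _ s r ctnn _ ict opt_t[unfolded \<pi>t] _ iss ir]) auto
  moreover have "prob_space (density ?R r)" "prob_space (density ?R s)"
    using cpl unfolding \<pi> \<pi>t couplings_def by auto
  ultimately show ?thesis
    unfolding \<pi> \<pi>t using r_nn s_nn ir iss
    by (intro KL_div_symmetrized_le[OF prob_space_independent_coupling r s]) auto
qed

end

theorem mainTheorem12:
  fixes N :: nat and S :: "nat \<Rightarrow> 'a set" and d :: "nat \<Rightarrow> 'a \<Rightarrow> 'a \<Rightarrow> real"
    and p :: ereal and \<mu> :: "nat \<Rightarrow> 'a measure"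
    and c ct :: "(nat \<Rightarrow> 'a) \<Rightarrow> real" and \<pi> \<pi>t :: "(nat \<Rightarrow> 'a) measure"
  assumes polish: "\<And>i. i < N \<Longrightarrow> polish_metric (S i) (d i)"
    and p: "1 \<le> p"
    and mu: "\<And>i. i < N \<Longrightarrow> P_p p (S i) (d i) (\<mu> i)"
    and c_meas: "c \<in> borel_measurable (\<Pi>\<^sub>M i\<in>{..<N}. \<mu> i)"
    and ct_meas: "ct \<in> borel_measurable (\<Pi>\<^sub>M i\<in>{..<N}. \<mu> i)"
    and c_nonneg: "\<And>x. x \<in> (\<Pi>\<^sub>E i\<in>{..<N}. S i) \<Longrightarrow> 0 \<le> c x"
    and ct_nonneg: "\<And>x. x \<in> (\<Pi>\<^sub>E i\<in>{..<N}. S i) \<Longrightarrow> 0 \<le> ct x"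
    and c_growth: "growth_p p N S d c"
    and ct_growth: "growth_p p N S d ct"
    and opt: "is_ent_optimizer N \<mu> c \<pi>"
    and opt_t: "is_ent_optimizer N \<mu> ct \<pi>t"
  shows "KL_div \<pi> \<pi>t + KL_div \<pi>t \<pi> \<le>
           ereal ((\<integral>x. c x - ct x \<partial>\<pi>t) - (\<integral>x. c x - ct x \<partial>\<pi>))"
proof -
  have prob: "\<And>i. i < N \<Longrightarrow> prob_space (\<mu> i)" using mu by (simp add: P_p_def)
  have space: "space (\<Pi>\<^sub>M i\<in>{..<N}. \<mu> i) = (\<Pi>\<^sub>E i\<in>{..<N}. S i)"
    by (rule space_PiM_metric_borel[OF polish mu])
  have ic: "\<And>P. P \<in> couplings N \<mu> \<Longrightarrow> integrable P c"
    by (rule integrable_coupling_growth[OF polish p mu c_meas c_growth])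
  have ict: "\<And>P. P \<in> couplings N \<mu> \<Longrightarrow> integrable P ct"
    by (rule integrable_coupling_growth[OF polish p mu ct_meas ct_growth])
  have "KL_div \<pi> \<pi>t + KL_div \<pi>t \<pi>
      \<le> ereal (((\<integral>x. c x \<partial>\<pi>t) - (\<integral>x. c x \<partial>\<pi>)) + ((\<integral>x. ct x \<partial>\<pi>) - (\<integral>x. ct x \<partial>\<pi>t)))"
    by (rule ent_optimizers_symmetrized_KL_le[OF prob c_meas ct_meas _ _ ic ict opt opt_t])
      (use c_nonneg ct_nonneg space in auto)
  also have "\<dots> = ereal ((\<integral>x. c x - ct x \<partial>\<pi>t) - (\<integral>x. c x - ct x \<partial>\<pi>))"
    using ic ict opt opt_t by (simp add: is_ent_optimizer_def)
  finally show ?thesis .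
qed

end
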